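(* Let $X$ be a $T_1$ space and $\mathcal{P}$ an ideal of closed subsets of $X$. Then $X$ is $\tau\mathcal{P}$-compact if and only if $X$ is both $\tau\mathcal{P}$-pseudocompact and $\tau\mathcal{P}$-real compact.
   Context: An ideal of closed subsets of $X$ is a family $\mathcal{P}$ of closed subsets closed under finite unions and under passing to closed subsets. $D_f$ is the set of discontinuity points of $f\in\mathbb{R}^X$; $C(X)_\mathcal{P}=\{f\in\mathbb{R}^X\colon\overline{D_f}\in\mathcal{P}\}$ (a ring under pointwise operations), $C^*(X)_\mathcal{P}$ its bounded members. For $f\in C(X)_\mathcal{P}$, $Z_\mathcal{P}(f)=\{x\colon f(x)=0\}$, $Z_\mathcal{P}[X]$ the set of all such sets, and for $I\subseteq C(X)_\mathcal{P}$, $Z_\mathcal{P}[I]=\{Z_\mathcal{P}(f)\colon f\in I\}$. $X$ is $\tau\mathcal{P}$-compact if every subfamily of $Z_\mathcal{P}[X]$ with the finite intersection property has nonempty intersection; $\tau\mathcal{P}$-pseudocompact if $C(X)_\mathcal{P}=C^*(X)_\mathcal{P}$. A maximal ideal $M$ of $C(X)_\mathcal{P}$ is real if $C(X)_\mathcal{P}/M$ is isomorphic to $\mathbb{R}$; an ideal $I$ is fixed if $\bigcap Z_\mathcal{P}[I]\neq\emptyset$. $X$ is $\tau\mathcal{P}$-real compact if every real maximal ideal of $C(X)_\mathcal{P}$ is fixed. *)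

theory Defs
  imports "HOL-Analysis.Analysis" "HOL-Algebra.QuotRing"
begin

definition cont_at :: "'a topology \<Rightarrow> ('a \<Rightarrow> real) \<Rightarrow> 'a \<Rightarrow> bool" where
  "cont_at X f x \<longleftrightarrow> (\<forall>V. open V \<and> f x \<in> V \<longrightarrow>
      (\<exists>U. openin X U \<and> x \<in> U \<and> f ` U \<subseteq> V))"

definition disc_pts :: "'a topology \<Rightarrow> ('a \<Rightarrow> real) \<Rightarrow> 'a set" where
  "disc_pts X f = {x \<in> topspace X. \<not> cont_at X f x}"

definition closed_ideal :: "'a topology \<Rightarrow> 'a set set \<Rightarrow> bool" where
  "closed_ideal X P \<longleftrightarrow> (\<forall>A\<in>P. closedin X A) \<and> {} \<in> P \<and>
     (\<forall>A\<in>P. \<forall>B\<in>P. A \<union> B \<in> P) \<and>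
     (\<forall>A\<in>P. \<forall>B. closedin X B \<and> B \<subseteq> A \<longrightarrow> B \<in> P)"

text \<open>Elements of R^X are represented as functions that vanish outside topspace X.\<close>
definition CP :: "'a topology \<Rightarrow> 'a set set \<Rightarrow> ('a \<Rightarrow> real) set" where
  "CP X P = {f. (\<forall>x. x \<notin> topspace X \<longrightarrow> f x = 0) \<and> X closure_of (disc_pts X f) \<in> P}"

definition CP_bdd :: "'a topology \<Rightarrow> 'a set set \<Rightarrow> ('a \<Rightarrow> real) set" where
  "CP_bdd X P = {f \<in> CP X P. \<exists>B. \<forall>x\<in>topspace X. \<bar>f x\<bar> \<le> B}"

definition CP_ring :: "'a topology \<Rightarrow> 'a set set \<Rightarrow> ('a \<Rightarrow> real) ring" where
  "CP_ring X P = \<lparr>carrier = CP X P,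
     monoid.mult = (\<lambda>f g x. f x * g x),
     one = (\<lambda>x. if x \<in> topspace X then 1 else 0),
     zero = (\<lambda>x. 0),
     add = (\<lambda>f g x. f x + g x)\<rparr>"

definition real_ring :: "real ring" where
  "real_ring = \<lparr>carrier = UNIV, monoid.mult = (*), one = 1, zero = 0, add = (+)\<rparr>"

definition ZP :: "'a topology \<Rightarrow> ('a \<Rightarrow> real) \<Rightarrow> 'a set" where
  "ZP X f = {x \<in> topspace X. f x = 0}"

definition fip :: "'a set set \<Rightarrow> bool" where
  "fip F \<longleftrightarrow> (\<forall>G. G \<subseteq> F \<and> finite G \<and> G \<noteq> {} \<longrightarrow> \<Inter>G \<noteq> {})"

definition tauP_compact :: "'a topology \<Rightarrow> 'a set set \<Rightarrow> bool" where
  "tauP_compact X P \<longleftrightarrow> (\<forall>F. F \<subseteq> ZP X ` CP X P \<and> F \<noteq> {} \<and> fip F \<longrightarrow> \<Inter>F \<noteq> {})"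

definition tauP_pseudocompact :: "'a topology \<Rightarrow> 'a set set \<Rightarrow> bool" where
  "tauP_pseudocompact X P \<longleftrightarrow> CP X P = CP_bdd X P"

definition real_maximal_ideal :: "'a topology \<Rightarrow> 'a set set \<Rightarrow> ('a \<Rightarrow> real) set \<Rightarrow> bool" where
  "real_maximal_ideal X P M \<longleftrightarrow> maximalideal M (CP_ring X P) \<and>
     (CP_ring X P Quot M) \<simeq> real_ring"

definition fixed_ideal :: "'a topology \<Rightarrow> ('a \<Rightarrow> real) set \<Rightarrow> bool" where
  "fixed_ideal X I \<longleftrightarrow> \<Inter>(ZP X ` I) \<noteq> {}"

definition tauP_realcompact :: "'a topology \<Rightarrow> 'a set set \<Rightarrow> bool" where
  "tauP_realcompact X P \<longleftrightarrow> (\<forall>M. real_maximal_ideal X P M \<longrightarrow> fixed_ideal X M)"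

end

theory Submission
  imports Defs "HOL-Algebra.Ring_Divisibility"
begin

text \<open>
  The zero sets of a proper ideal of C(X)_P have the finite intersection property: Z(f) \<inter> Z(g)
  = Z(f^2 + g^2), and a function without zeros is invertible. Hence \<tau>P-compactness makes every
  (real) maximal ideal fixed, and it also gives \<tau>P-pseudocompactness, since an unbounded f has
  the decreasing nonempty zero sets {n \<le> |f|} with empty intersection.

  Conversely, a family of zero sets with the finite intersection property generates a proper
  ideal, contained in a maximal ideal M by Zorn's lemma. When all functions are bounded, M is
  real: every f is congruent modulo M to the constant r = inf {s. max (f - s) 0 \<in> M}, and
  f \<mapsto> r is a ring homomorphism onto \<real> with kernel M. By \<tau>P-realcompactness M has a common
  zero, which lies in every member of the family.
\<close>

lemma (in ring) exists_maximalideal_superset: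
  assumes "ideal I R" and "\<one> \<notin> I"
  shows "\<exists>M. maximalideal M R \<and> I \<subseteq> M"
proof -
  define S where "S = {J. ideal J R \<and> I \<subseteq> J \<and> \<one> \<notin> J}"
  have "\<exists>M\<in>S. \<forall>J\<in>S. M \<subseteq> J \<longrightarrow> J = M"
  proof (rule subset_Zorn_nonempty)
    show "S \<noteq> {}" using assms unfolding S_def by blast
    fix C assume C: "C \<noteq> {}" "subset.chain S C"
    then have "subset.chain {J. ideal J R} C"
      unfolding S_def pred_on.chain_def by blast
    then have "ideal (\<Union>C) R" using chain_Union_is_ideal C(1) by presburger
    then show "\<Union>C \<in> S" using C unfolding S_def pred_on.chain_def by blast
  qed
  then obtain M where M: "M \<in> S" and max: "\<And>J. J \<in> S \<Longrightarrow> M \<subseteq> J \<Longrightarrow> J = M" by blast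
  have "maximalideal M R"
  proof (rule maximalidealI)
    show "ideal M R" "carrier R \<noteq> M" using M unfolding S_def by auto
    fix J assume "ideal J R" "M \<subseteq> J" "J \<subseteq> carrier R"
    then show "J = M \<or> J = carrier R"
      using ideal.one_imp_carrier max[of J] M unfolding S_def by blast
  qed
  then show ?thesis using M unfolding S_def by blast
qed

lemma fip_range_decseq:
  assumes "decseq Z" and "\<And>n. Z n \<noteq> {}"
  shows "fip (range Z)"
  unfolding fip_def
proof (intro allI impI)
  fix G assume "G \<subseteq> range Z \<and> finite G \<and> G \<noteq> {}"
  then obtain N where N: "finite N" "N \<noteq> {}" "G = Z ` N"
    by (metis finite_subset_image image_is_empty)
  have "Z (Max N) \<subseteq> Z n" if "n \<in> N" for n
    using \<open>decseq Z\<close> Max_ge[OF N(1) that] by (simp add: decseq_def)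
  then have "Z (Max N) \<subseteq> \<Inter>G"
    using N(3) by blast
  then show "\<Inter>G \<noteq> {}" using assms(2) by blast
qed

section \<open>The ring C(X)_P\<close>

definition restrict0 :: "'a topology \<Rightarrow> ('a \<Rightarrow> real) \<Rightarrow> 'a \<Rightarrow> real" where
  "restrict0 X h = (\<lambda>x. if x \<in> topspace X then h x else 0)"

abbreviation cst :: "'a topology \<Rightarrow> real \<Rightarrow> 'a \<Rightarrow> real" where
  "cst X r \<equiv> restrict0 X (\<lambda>_. r)"

lemma cont_at_imp_in_topspace: "cont_at X f x \<Longrightarrow> x \<in> topspace X"
  unfolding cont_at_def by (metis open_UNIV UNIV_I openin_subset subsetD)

lemma cont_at_cong:
  assumes "cont_at X f x" and "\<And>y. y \<in> topspace X \<Longrightarrow> g y = f y"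
  shows "cont_at X g x"
  unfolding cont_at_def
proof (intro allI impI)
  fix V assume "open V \<and> g x \<in> V"
  moreover have "g x = f x"
    using assms by (simp add: cont_at_imp_in_topspace)
  ultimately obtain U where U: "openin X U" "x \<in> U" "f ` U \<subseteq> V"
    using assms(1) unfolding cont_at_def by metis
  moreover have "g ` U \<subseteq> V"
    using U(3) assms(2) openin_subset[OF U(1)] by force
  ultimately show "\<exists>U. openin X U \<and> x \<in> U \<and> g ` U \<subseteq> V" by blast
qed

lemma cont_at_const: "x \<in> topspace X \<Longrightarrow> (\<And>y. y \<in> topspace X \<Longrightarrow> f y = c) \<Longrightarrow> cont_at X f x"
  unfolding cont_at_def by (intro allI impI exI[of _ "topspace X"]) auto

lemma cont_at_compose2:
  assumes "cont_at X f x" and "cont_at X g x"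
    and "isCont (\<lambda>p. F (fst p) (snd p)) (f x, g x)"
  shows "cont_at X (\<lambda>y. F (f y) (g y)) x"
  unfolding cont_at_def
proof (intro allI impI)
  fix V assume V: "open V \<and> F (f x) (g x) \<in> V"
  obtain W where W: "open W" "(f x, g x) \<in> W" "\<forall>p\<in>W. F (fst p) (snd p) \<in> V"
    using continuous_at_open[THEN iffD1, OF assms(3), rule_format, of V] V by auto
  obtain A B where AB: "open A" "open B" "(f x, g x) \<in> A \<times> B" "A \<times> B \<subseteq> W"
    by (rule open_prod_elim[OF W(1,2)])
  obtain U1 where U1: "openin X U1" "x \<in> U1" "f ` U1 \<subseteq> A"
    using assms(1) AB(1,3) unfolding cont_at_def by blast
  obtain U2 where U2: "openin X U2" "x \<in> U2" "g ` U2 \<subseteq> B"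
    using assms(2) AB(2,3) unfolding cont_at_def by blast
  have "(\<lambda>y. F (f y) (g y)) ` (U1 \<inter> U2) \<subseteq> V"
  proof clarify
    fix y assume "y \<in> U1" "y \<in> U2"
    then have "(f y, g y) \<in> W" using U1(3) U2(3) AB(4) by blast
    then show "F (f y) (g y) \<in> V" using W(3) by force
  qed
  then show "\<exists>U. openin X U \<and> x \<in> U \<and> (\<lambda>y. F (f y) (g y)) ` U \<subseteq> V"
    using openin_Int[OF U1(1) U2(1)] U1(2) U2(2) by blast
qed

lemma disc_pts_compose2_subset:
  assumes "\<And>x. x \<in> topspace X \<Longrightarrow> isCont (\<lambda>p. F (fst p) (snd p)) (f x, g x)"
  shows "disc_pts X (restrict0 X (\<lambda>y. F (f y) (g y))) \<subseteq> disc_pts X f \<union> disc_pts X g"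
proof
  fix x assume x: "x \<in> disc_pts X (restrict0 X (\<lambda>y. F (f y) (g y)))"
  then have "x \<in> topspace X" by (simp add: disc_pts_def)
  show "x \<in> disc_pts X f \<union> disc_pts X g"
  proof (rule ccontr)
    assume "x \<notin> disc_pts X f \<union> disc_pts X g"
    then have "cont_at X (\<lambda>y. F (f y) (g y)) x"
      using \<open>x \<in> topspace X\<close> assms by (auto simp: disc_pts_def intro!: cont_at_compose2[of X f x g F])
    then have "cont_at X (restrict0 X (\<lambda>y. F (f y) (g y))) x"
      by (rule cont_at_cong) (simp add: restrict0_def)
    with x show False by (simp add: disc_pts_def)
  qed
qed

lemma CP_vanishes_outside: "f \<in> CP X P \<Longrightarrow> x \<notin> topspace X \<Longrightarrow> f x = 0"
  unfolding CP_def by auto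

lemma closed_ideal_closed_subset:
  "closed_ideal X P \<Longrightarrow> A \<in> P \<Longrightarrow> closedin X B \<Longrightarrow> B \<subseteq> A \<Longrightarrow> B \<in> P"
  unfolding closed_ideal_def by blast

lemma CP_compose2:
  assumes P: "closed_ideal X P" and "f \<in> CP X P" "g \<in> CP X P"
    and "\<And>x. x \<in> topspace X \<Longrightarrow> isCont (\<lambda>p. F (fst p) (snd p)) (f x, g x)"
  shows "restrict0 X (\<lambda>y. F (f y) (g y)) \<in> CP X P"
proof -
  let ?h = "restrict0 X (\<lambda>y. F (f y) (g y))"
  have "X closure_of disc_pts X f \<in> P" "X closure_of disc_pts X g \<in> P"
    using assms(2,3) by (simp_all add: CP_def)
  then have "X closure_of disc_pts X f \<union> X closure_of disc_pts X g \<in> P"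
    using P unfolding closed_ideal_def by blast
  moreover have "X closure_of disc_pts X ?h \<subseteq> X closure_of disc_pts X f \<union> X closure_of disc_pts X g"
    using closure_of_mono[OF disc_pts_compose2_subset[OF assms(4)]] by simp
  ultimately have "X closure_of disc_pts X ?h \<in> P"
    using closed_ideal_closed_subset[OF P] closedin_closure_of by blast
  then show ?thesis unfolding CP_def by (simp add: restrict0_def)
qed

lemma CP_compose2_zero:
  assumes "closed_ideal X P" and f: "f \<in> CP X P" and g: "g \<in> CP X P"
    and "\<And>x. x \<in> topspace X \<Longrightarrow> isCont (\<lambda>p. F (fst p) (snd p)) (f x, g x)"
    and "F 0 0 = 0"
  shows "(\<lambda>y. F (f y) (g y)) \<in> CP X P"
proof -
  have "restrict0 X (\<lambda>y. F (f y) (g y)) = (\<lambda>y. F (f y) (g y))"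
    using CP_vanishes_outside[OF f] CP_vanishes_outside[OF g] \<open>F 0 0 = 0\<close>
    by (auto simp: restrict0_def)
  then show ?thesis using CP_compose2[OF assms(1-4)] by simp
qed

lemma CP_compose:
  assumes "closed_ideal X P" and "f \<in> CP X P"
    and "\<And>x. x \<in> topspace X \<Longrightarrow> isCont F (f x)"
  shows "restrict0 X (\<lambda>y. F (f y)) \<in> CP X P"
proof -
  have "isCont (\<lambda>p. F (fst p)) (f x, f x)" if "x \<in> topspace X" for x
    using isCont_o2[of "(f x, f x)" fst F] isCont_fst[OF continuous_ident] assms(3)[OF that]
    by simp
  then show ?thesis using CP_compose2[OF assms(1,2,2), of "\<lambda>a b. F a"] by simp
qed

lemma CP_const:
  assumes "closed_ideal X P"
  shows "cst X c \<in> CP X P"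
proof -
  have "disc_pts X (cst X c) = {}"
    by (auto simp: disc_pts_def restrict0_def intro: cont_at_const)
  moreover have "{} \<in> P" using assms unfolding closed_ideal_def by blast
  ultimately show ?thesis unfolding CP_def by (simp add: restrict0_def)
qed

lemma CP_zero: "closed_ideal X P \<Longrightarrow> (\<lambda>_. 0) \<in> CP X P"
  using CP_const[of X P 0] by (simp add: restrict0_def)

lemma CP_add: "closed_ideal X P \<Longrightarrow> f \<in> CP X P \<Longrightarrow> g \<in> CP X P \<Longrightarrow> (\<lambda>x. f x + g x) \<in> CP X P"
  by (rule CP_compose2_zero, assumption+, intro continuous_intros, simp)

lemma CP_mult: "closed_ideal X P \<Longrightarrow> f \<in> CP X P \<Longrightarrow> g \<in> CP X P \<Longrightarrow> (\<lambda>x. f x * g x) \<in> CP X P"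
  by (rule CP_compose2_zero, assumption+, intro continuous_intros, simp)

lemma CP_diff: "closed_ideal X P \<Longrightarrow> f \<in> CP X P \<Longrightarrow> g \<in> CP X P \<Longrightarrow> (\<lambda>x. f x - g x) \<in> CP X P"
  by (rule CP_compose2_zero, assumption+, intro continuous_intros, simp)

lemma CP_uminus: "closed_ideal X P \<Longrightarrow> f \<in> CP X P \<Longrightarrow> (\<lambda>x. - f x) \<in> CP X P"
  using CP_diff[of X P "\<lambda>_. 0" f] CP_zero[of X P] by simp

lemma one_CP_ring: "\<one>\<^bsub>CP_ring X P\<^esub> = cst X 1"
  by (simp add: CP_ring_def restrict0_def)

lemma CP_one: "closed_ideal X P \<Longrightarrow> \<one>\<^bsub>CP_ring X P\<^esub> \<in> CP X P"
  unfolding one_CP_ring by (rule CP_const)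

lemma cring_CP_ring:
  assumes P: "closed_ideal X P"
  shows "cring (CP_ring X P)"
proof (rule cringI)
  show "abelian_group (CP_ring X P)"
  proof (rule abelian_groupI)
    fix f assume "f \<in> carrier (CP_ring X P)"
    then show "\<exists>g\<in>carrier (CP_ring X P). g \<oplus>\<^bsub>CP_ring X P\<^esub> f = \<zero>\<^bsub>CP_ring X P\<^esub>"
      using CP_uminus[OF P] by (intro bexI[of _ "\<lambda>x. - f x"]) (auto simp: CP_ring_def)
  qed (auto simp: CP_ring_def CP_add[OF P] CP_zero[OF P] algebra_simps)
  show "comm_monoid (CP_ring X P)"
  proof (rule comm_monoidI)
    fix f assume "f \<in> carrier (CP_ring X P)"
    then show "\<one>\<^bsub>CP_ring X P\<^esub> \<otimes>\<^bsub>CP_ring X P\<^esub> f = f"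
      using CP_vanishes_outside[of f X P] by (auto simp: CP_ring_def)
  qed (auto simp: CP_ring_def CP_mult[OF P] CP_one[OF P, unfolded CP_ring_def, simplified] algebra_simps)
qed (auto simp: CP_ring_def algebra_simps)

lemma cring_real_ring: "cring real_ring"
proof (rule cringI)
  show "abelian_group real_ring"
    by (rule abelian_groupI) (auto simp: real_ring_def algebra_simps intro: exI[of _ "- x" for x])
  show "comm_monoid real_ring"
    by (rule comm_monoidI) (auto simp: real_ring_def algebra_simps)
qed (auto simp: real_ring_def algebra_simps)

section \<open>Ideals and zero sets\<close>

definition CP_ideal :: "'a topology \<Rightarrow> 'a set set \<Rightarrow> ('a \<Rightarrow> real) set \<Rightarrow> bool" where
  "CP_ideal X P J \<longleftrightarrow> J \<subseteq> CP X P \<and> (\<lambda>_. 0) \<in> J \<and> (\<forall>f\<in>J. \<forall>g\<in>J. (\<lambda>x. f x + g x) \<in> J) \<and>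
     (\<forall>f\<in>J. \<forall>h\<in>CP X P. (\<lambda>x. h x * f x) \<in> J)"

lemma CP_ideal_subset: "CP_ideal X P J \<Longrightarrow> f \<in> J \<Longrightarrow> f \<in> CP X P"
  unfolding CP_ideal_def by blast

lemma CP_ideal_zero: "CP_ideal X P J \<Longrightarrow> (\<lambda>_. 0) \<in> J"
  unfolding CP_ideal_def by blast

lemma CP_ideal_add: "CP_ideal X P J \<Longrightarrow> f \<in> J \<Longrightarrow> g \<in> J \<Longrightarrow> (\<lambda>x. f x + g x) \<in> J"
  unfolding CP_ideal_def by blast

lemma CP_ideal_mult: "CP_ideal X P J \<Longrightarrow> f \<in> J \<Longrightarrow> h \<in> CP X P \<Longrightarrow> (\<lambda>x. h x * f x) \<in> J"
  unfolding CP_ideal_def by blast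

lemma CP_ideal_uminus:
  assumes "closed_ideal X P" "CP_ideal X P J" "f \<in> J"
  shows "(\<lambda>x. - f x) \<in> J"
proof -
  have "(\<lambda>x. cst X (-1) x * f x) \<in> J"
    using CP_ideal_mult[OF assms(2,3) CP_const[OF assms(1)]] .
  moreover have "(\<lambda>x. cst X (-1) x * f x) = (\<lambda>x. - f x)"
    using CP_vanishes_outside[OF CP_ideal_subset[OF assms(2,3)]] by (auto simp: restrict0_def)
  ultimately show ?thesis by simp
qed

lemma CP_ideal_diff:
  assumes "closed_ideal X P" "CP_ideal X P J" "f \<in> J" "g \<in> J"
  shows "(\<lambda>x. f x - g x) \<in> J"
  using CP_ideal_add[OF assms(2,3) CP_ideal_uminus[OF assms(1,2,4)]] by simp

lemma CP_ideal_sum_squares: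
  "CP_ideal X P J \<Longrightarrow> f \<in> J \<Longrightarrow> g \<in> J \<Longrightarrow> (\<lambda>x. f x * f x + g x * g x) \<in> J"
  by (intro CP_ideal_add CP_ideal_mult) (auto dest: CP_ideal_subset)

lemma ideal_iff_CP_ideal:
  assumes P: "closed_ideal X P"
  shows "ideal J (CP_ring X P) \<longleftrightarrow> CP_ideal X P J"
proof
  assume "ideal J (CP_ring X P)"
  then interpret ideal J "CP_ring X P" .
  show "CP_ideal X P J"
    unfolding CP_ideal_def
    using a_subset additive_subgroup.zero_closed[OF is_additive_subgroup]
      additive_subgroup.a_closed[OF is_additive_subgroup] I_l_closed
    by (simp add: CP_ring_def)
next
  assume J: "CP_ideal X P J"
  interpret cring "CP_ring X P" by (rule cring_CP_ring[OF P])
  show "ideal J (CP_ring X P)"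
  proof (rule idealI)
    show "ring (CP_ring X P)" by (rule ring_axioms)
    show "subgroup J (add_monoid (CP_ring X P))"
    proof (rule subgroup.intro)
      fix f assume f: "f \<in> J"
      then have "\<ominus>\<^bsub>CP_ring X P\<^esub> f = (\<lambda>x. - f x)"
        using CP_ideal_subset[OF J] CP_uminus[OF P]
        by (intro minus_equality) (auto simp: CP_ring_def)
      then show "inv\<^bsub>add_monoid (CP_ring X P)\<^esub> f \<in> J"
        using CP_ideal_uminus[OF P J f] by (simp add: a_inv_def)
    qed (use J in \<open>auto simp: CP_ideal_def CP_ring_def\<close>)
  qed (use J in \<open>auto simp: CP_ideal_def CP_ring_def mult.commute\<close>)
qed

lemma CP_ideal_sum_principal:
  assumes P: "closed_ideal X P" and J: "CP_ideal X P J" and f: "f \<in> CP X P"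
  shows "CP_ideal X P {(\<lambda>x. m x + k x * f x) | m k. m \<in> J \<and> k \<in> CP X P}"
    (is "CP_ideal X P ?K")
proof -
  have K_intro: "(\<lambda>x. m x + k x * f x) \<in> ?K" if "m \<in> J" "k \<in> CP X P" for m k
    using that by blast
  show ?thesis
    unfolding CP_ideal_def
  proof (intro conjI ballI subsetI)
    fix h assume "h \<in> ?K"
    then obtain m k where "m \<in> J" "k \<in> CP X P" "h = (\<lambda>x. m x + k x * f x)" by blast
    then show "h \<in> CP X P"
      using CP_add[OF P CP_ideal_subset[OF J] CP_mult[OF P _ f]] by blast
  next
    show "(\<lambda>_. 0) \<in> ?K"
      using K_intro[OF CP_ideal_zero[OF J] CP_zero[OF P]] by simp
  next
    fix a b assume "a \<in> ?K" "b \<in> ?K"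
    then obtain m k m' k' where "m \<in> J" "k \<in> CP X P" "a = (\<lambda>x. m x + k x * f x)"
      and "m' \<in> J" "k' \<in> CP X P" "b = (\<lambda>x. m' x + k' x * f x)"
      by blast
    then show "(\<lambda>x. a x + b x) \<in> ?K"
      using K_intro[OF CP_ideal_add[OF J] CP_add[OF P], of m m' k k']
      by (simp add: algebra_simps)
  next
    fix a r assume "a \<in> ?K" "r \<in> CP X P"
    then obtain m k where "m \<in> J" "k \<in> CP X P" "a = (\<lambda>x. m x + k x * f x)"
      by blast
    then show "(\<lambda>x. r x * a x) \<in> ?K"
      using K_intro[OF CP_ideal_mult[OF J] CP_mult[OF P], of m r r k] \<open>r \<in> CP X P\<close>
      by (simp add: algebra_simps)
  qed
qed

lemma ZP_subset_topspace: "ZP X f \<subseteq> topspace X"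
  unfolding ZP_def by auto

lemma ZP_sum_squares: "ZP X (\<lambda>x. f x * f x + g x * g x) = ZP X f \<inter> ZP X g"
  unfolding ZP_def by (auto simp: add_nonneg_eq_0_iff)

lemma ZP_const: "ZP X (cst X r) = (if r = 0 then topspace X else {})"
  unfolding ZP_def restrict0_def by auto

text \<open>A member of C(X)_P without zeros is a unit, since 1/f has no new discontinuities.\<close>
lemma CP_ideal_ZP_nonempty:
  assumes P: "closed_ideal X P" and J: "CP_ideal X P J" and "cst X 1 \<notin> J" and f: "f \<in> J"
  shows "ZP X f \<noteq> {}"
proof
  assume Z: "ZP X f = {}"
  then have nz: "f x \<noteq> 0" if "x \<in> topspace X" for x using that by (auto simp: ZP_def)
  have "restrict0 X (\<lambda>x. 1 / f x) \<in> CP X P"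
    using CP_ideal_subset[OF J f] nz by (intro CP_compose[OF P]) (auto intro!: continuous_intros)
  then have "(\<lambda>x. restrict0 X (\<lambda>x. 1 / f x) x * f x) \<in> J"
    by (rule CP_ideal_mult[OF J f])
  moreover have "(\<lambda>x. restrict0 X (\<lambda>x. 1 / f x) x * f x) = cst X 1"
    using nz by (auto simp: restrict0_def)
  ultimately show False using \<open>cst X 1 \<notin> J\<close> by simp
qed

lemma CP_ideal_Inter_ZP:
  assumes J: "CP_ideal X P J"
  shows "finite G \<Longrightarrow> G \<noteq> {} \<Longrightarrow> G \<subseteq> ZP X ` J \<Longrightarrow> \<exists>h\<in>J. ZP X h = \<Inter>G"
proof (induction G rule: finite_ne_induct)
  case (singleton Z)
  then show ?case by auto
next
  case (insert Z G)
  then obtain h f where "h \<in> J" "ZP X h = \<Inter>G" "f \<in> J" "Z = ZP X f" by auto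
  then show ?case
    using CP_ideal_sum_squares[OF J, of f h] ZP_sum_squares[of X f h] by auto
qed

lemma CP_ideal_fip:
  assumes "closed_ideal X P" "CP_ideal X P J" "cst X 1 \<notin> J"
  shows "fip (ZP X ` J)"
  unfolding fip_def
  using CP_ideal_Inter_ZP[OF assms(2)] CP_ideal_ZP_nonempty[OF assms] by metis

section \<open>Maximal ideals\<close>

definition part_above :: "'a topology \<Rightarrow> ('a \<Rightarrow> real) \<Rightarrow> real \<Rightarrow> 'a \<Rightarrow> real" where
  "part_above X f s = restrict0 X (\<lambda>x. max (f x - s) 0)"

definition part_below :: "'a topology \<Rightarrow> ('a \<Rightarrow> real) \<Rightarrow> real \<Rightarrow> 'a \<Rightarrow> real" where
  "part_below X f s = restrict0 X (\<lambda>x. min (f x - s) 0)"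

lemma CP_part_above: "closed_ideal X P \<Longrightarrow> f \<in> CP X P \<Longrightarrow> part_above X f s \<in> CP X P"
  unfolding part_above_def by (rule CP_compose[of X P f "\<lambda>t. max (t - s) 0"]) (auto intro!: continuous_intros)

lemma CP_part_below: "closed_ideal X P \<Longrightarrow> f \<in> CP X P \<Longrightarrow> part_below X f s \<in> CP X P"
  unfolding part_below_def by (rule CP_compose[of X P f "\<lambda>t. min (t - s) 0"]) (auto intro!: continuous_intros)

lemma ZP_part_above: "ZP X (part_above X f s) = {x \<in> topspace X. f x \<le> s}"
  by (auto simp: ZP_def part_above_def restrict0_def max_def)

lemma ZP_part_below: "ZP X (part_below X f s) = {x \<in> topspace X. s \<le> f x}"
  by (auto simp: ZP_def part_below_def restrict0_def min_def)

lemma part_above_mult_part_below: "(\<lambda>x. part_above X f s x * part_below X f s x) = (\<lambda>_. 0)"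
  by (auto simp: fun_eq_iff part_above_def part_below_def restrict0_def)

lemma tauP_pseudocompact_imp_bounded:
  assumes "tauP_pseudocompact X P" and "f \<in> CP X P"
  shows "\<exists>K>0. \<forall>x\<in>topspace X. \<bar>f x\<bar> \<le> K"
proof -
  obtain B where "\<forall>x\<in>topspace X. \<bar>f x\<bar> \<le> B"
    using assms unfolding tauP_pseudocompact_def CP_bdd_def by blast
  then show ?thesis by (intro exI[of _ "\<bar>B\<bar> + 1"]) force
qed

locale CP_maximal_ideal =
  fixes X :: "'a topology" and P :: "'a set set" and M :: "('a \<Rightarrow> real) set"
  assumes closed_ideal: "closed_ideal X P"
    and maximal: "maximalideal M (CP_ring X P)"
begin

lemma is_CP_ideal: "CP_ideal X P M"
  using maximal closed_ideal ideal_iff_CP_ideal maximalideal.axioms(1) by blast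

lemma const_one_notin: "cst X 1 \<notin> M"
  using maximalideal.I_notcarr[OF maximal] ideal.one_imp_carrier[OF maximalideal.axioms(1)[OF maximal]]
  by (auto simp: one_CP_ring)

lemma ZP_nonempty: "f \<in> M \<Longrightarrow> ZP X f \<noteq> {}"
  by (rule CP_ideal_ZP_nonempty[OF closed_ideal is_CP_ideal const_one_notin])

lemma fip_ZP: "fip (ZP X ` M)"
  by (rule CP_ideal_fip[OF closed_ideal is_CP_ideal const_one_notin])

lemma prime: "g \<in> CP X P \<Longrightarrow> h \<in> CP X P \<Longrightarrow> (\<lambda>x. g x * h x) \<in> M \<Longrightarrow> g \<in> M \<or> h \<in> M"
  using primeideal.I_prime[OF cring.maximalideal_prime[OF cring_CP_ring[OF closed_ideal] maximal]]
  by (simp add: CP_ring_def)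

text \<open>The ideal generated by M and f properly contains M, so it contains 1.\<close>
lemma exists_inverse_mod:
  assumes f: "f \<in> CP X P" and "f \<notin> M"
  shows "\<exists>k\<in>CP X P. (\<lambda>x. f x * k x - cst X 1 x) \<in> M"
proof -
  define J where "J = {(\<lambda>x. m x + k x * f x) | m k. m \<in> M \<and> k \<in> CP X P}"
  have J_intro: "(\<lambda>x. m x + k x * f x) \<in> J" if "m \<in> M" "k \<in> CP X P" for m k
    unfolding J_def using that by blast
  have "ideal J (CP_ring X P)"
    unfolding J_def ideal_iff_CP_ideal[OF closed_ideal]
    by (rule CP_ideal_sum_principal[OF closed_ideal is_CP_ideal f])
  moreover have "M \<subseteq> J"
    using J_intro[OF _ CP_zero[OF closed_ideal]] by fastforce
  moreover have "f \<in> J"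
  proof -
    have "(\<lambda>x. 0 + cst X 1 x * f x) = f"
      using CP_vanishes_outside[OF f] by (auto simp: restrict0_def)
    then show ?thesis
      using J_intro[OF CP_ideal_zero[OF is_CP_ideal] CP_const[OF closed_ideal, of 1]] by simp
  qed
  ultimately have "J = carrier (CP_ring X P)"
    using maximalideal.I_maximal[OF maximal] \<open>f \<notin> M\<close> ideal.axioms(1)[THEN additive_subgroup.a_subset]
    by blast
  then have "cst X 1 \<in> J"
    using CP_const[OF closed_ideal] by (simp add: CP_ring_def)
  then obtain m k where mk: "m \<in> M" "k \<in> CP X P" "cst X 1 = (\<lambda>x. m x + k x * f x)"
    unfolding J_def by blast
  then have "(\<lambda>x. f x * k x - cst X 1 x) = (\<lambda>x. - m x)"
    by (simp add: fun_eq_iff algebra_simps)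
  then have "(\<lambda>x. f x * k x - cst X 1 x) \<in> M"
    using CP_ideal_uminus[OF closed_ideal is_CP_ideal mk(1)] by simp
  with mk(2) show ?thesis by blast
qed

lemma mem_of_ZP_subset:
  assumes g: "g \<in> M" and h: "h \<in> CP X P" and "ZP X g \<subseteq> ZP X h"
  shows "h \<in> M"
proof (rule ccontr)
  assume "h \<notin> M"
  then obtain k where "k \<in> CP X P" and m: "(\<lambda>x. h x * k x - cst X 1 x) \<in> M"
    using exists_inverse_mod[OF h] by blast
  have "ZP X g \<inter> ZP X (\<lambda>x. h x * k x - cst X 1 x) = {}"
    using \<open>ZP X g \<subseteq> ZP X h\<close> unfolding ZP_def restrict0_def by auto
  then show False
    using ZP_nonempty[OF CP_ideal_sum_squares[OF is_CP_ideal g m]] by (simp add: ZP_sum_squares)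
qed

text \<open>For bounded f take r = inf {s. part_above X f s \<in> M}: then M contains part_above X f s for
  s > r and, being prime, part_below X f s for s < r.\<close>
lemma exists_approx_value:
  assumes f: "f \<in> CP X P" and B: "\<And>x. x \<in> topspace X \<Longrightarrow> \<bar>f x\<bar> \<le> B"
  shows "\<exists>r. \<forall>e>0. \<exists>g\<in>M. ZP X g \<subseteq> {x. \<bar>f x - r\<bar> \<le> e}"
proof -
  note above_CP = CP_part_above[OF closed_ideal f] and below_CP = CP_part_below[OF closed_ideal f]
  define A where "A = {s. part_above X f s \<in> M}"
  have "ZP X (\<lambda>_. 0) \<subseteq> ZP X (part_above X f B)"
    unfolding ZP_part_above using B by (auto simp: ZP_def abs_le_iff)
  then have "B \<in> A"
    using mem_of_ZP_subset[OF CP_ideal_zero[OF is_CP_ideal] above_CP] by (simp add: A_def)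
  have A_lower: "- B \<le> s" if "s \<in> A" for s
  proof (rule ccontr)
    assume "\<not> - B \<le> s"
    then have "ZP X (part_above X f s) = {}" using B by (force simp: ZP_part_above abs_le_iff)
    with ZP_nonempty that show False by (auto simp: A_def)
  qed
  define r where "r = Inf A"
  have above_in: "part_above X f t \<in> M" if "r < t" for t
  proof -
    obtain s where "s \<in> A" "s < t"
      using cInf_lessD[of A t] \<open>B \<in> A\<close> \<open>r < t\<close> unfolding r_def by blast
    then show ?thesis
      using mem_of_ZP_subset[OF _ above_CP, of "part_above X f s" t] by (force simp: A_def ZP_part_above)
  qed
  have below_in: "part_below X f t \<in> M" if "t < r" for t
  proof -
    have "t \<notin> A"
      using cInf_lower[of t A] A_lower that unfolding r_def bdd_below_def by force
    then show ?thesis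
      using prime[OF above_CP below_CP, of t t] CP_ideal_zero[OF is_CP_ideal]
      by (simp add: A_def part_above_mult_part_below)
  qed
  have "\<exists>g\<in>M. ZP X g \<subseteq> {x. \<bar>f x - r\<bar> \<le> e}" if "e > 0" for e
  proof
    let ?g = "\<lambda>x. part_above X f (r + e) x * part_above X f (r + e) x
      + part_below X f (r - e) x * part_below X f (r - e) x"
    show "?g \<in> M"
      using that by (intro CP_ideal_sum_squares[OF is_CP_ideal] above_in below_in) auto
    show "ZP X ?g \<subseteq> {x. \<bar>f x - r\<bar> \<le> e}"
      by (auto simp: ZP_sum_squares ZP_part_above ZP_part_below)
  qed
  then show ?thesis by blast
qed

lemma congruent_const_of_approx_value:
  assumes pc: "tauP_pseudocompact X P" and f: "f \<in> CP X P"
    and approx: "\<And>e. e > 0 \<Longrightarrow> \<exists>g\<in>M. ZP X g \<subseteq> {x. \<bar>f x - r\<bar> \<le> e}"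
  shows "(\<lambda>x. f x - cst X r x) \<in> M"
proof (rule ccontr)
  define d where "d = (\<lambda>x. f x - cst X r x)"
  assume "\<not> ?thesis"
  then obtain k where "k \<in> CP X P" and dk: "(\<lambda>x. d x * k x - cst X 1 x) \<in> M"
    using exists_inverse_mod CP_diff[OF closed_ideal f CP_const[OF closed_ideal]]
    unfolding d_def by blast
  then obtain K where "K > 0" and K: "\<And>x. x \<in> topspace X \<Longrightarrow> \<bar>k x\<bar> \<le> K"
    using tauP_pseudocompact_imp_bounded[OF pc] by blast
  then obtain g where "g \<in> M" and g: "ZP X g \<subseteq> {x. \<bar>f x - r\<bar> \<le> 1 / (2 * K)}"
    using approx[of "1 / (2 * K)"] by auto
  have "ZP X g \<inter> ZP X (\<lambda>x. d x * k x - cst X 1 x) = {}"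
  proof (rule ccontr)
    assume "ZP X g \<inter> ZP X (\<lambda>x. d x * k x - cst X 1 x) \<noteq> {}"
    then obtain x where "x \<in> ZP X g" and "x \<in> ZP X (\<lambda>x. d x * k x - cst X 1 x)" by blast
    then have x: "x \<in> topspace X" "\<bar>f x - r\<bar> \<le> 1 / (2 * K)" "(f x - r) * k x = 1"
      using g by (auto simp: ZP_def d_def restrict0_def)
    have "\<bar>(f x - r) * k x\<bar> \<le> 1 / (2 * K) * K"
      unfolding abs_mult using x(2) K[OF x(1)] by (intro mult_mono) auto
    also have "\<dots> = 1 / 2" using \<open>K > 0\<close> by simp
    finally show False using x(3) by simp
  qed
  then show False
    using ZP_nonempty[OF CP_ideal_sum_squares[OF is_CP_ideal \<open>g \<in> M\<close> dk]] by (simp add: ZP_sum_squares)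
qed

lemma congruent_const_unique:
  assumes "(\<lambda>x. f x - cst X r x) \<in> M" and "(\<lambda>x. f x - cst X s x) \<in> M"
  shows "r = s"
proof (rule ccontr)
  assume "r \<noteq> s"
  have "(\<lambda>x. (f x - cst X s x) - (f x - cst X r x)) \<in> M"
    by (rule CP_ideal_diff[OF closed_ideal is_CP_ideal assms(2,1)])
  moreover have "ZP X (\<lambda>x. (f x - cst X s x) - (f x - cst X r x)) = {}"
    using \<open>r \<noteq> s\<close> by (auto simp: ZP_def restrict0_def)
  ultimately show False using ZP_nonempty by blast
qed

definition residue :: "('a \<Rightarrow> real) \<Rightarrow> real" where
  "residue f = (THE r. (\<lambda>x. f x - cst X r x) \<in> M)"

lemma residue_eqI: "(\<lambda>x. f x - cst X r x) \<in> M \<Longrightarrow> residue f = r"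
  unfolding residue_def by (rule the_equality) (auto intro: congruent_const_unique)

lemma residue_congruent:
  assumes pc: "tauP_pseudocompact X P" and f: "f \<in> CP X P"
  shows "(\<lambda>x. f x - cst X (residue f) x) \<in> M"
proof -
  obtain K where "\<forall>x\<in>topspace X. \<bar>f x\<bar> \<le> K"
    using tauP_pseudocompact_imp_bounded[OF pc f] by blast
  then obtain r where "\<forall>e>0. \<exists>g\<in>M. ZP X g \<subseteq> {x. \<bar>f x - r\<bar> \<le> e}"
    using exists_approx_value[OF f] by blast
  then have "(\<lambda>x. f x - cst X r x) \<in> M"
    by (intro congruent_const_of_approx_value[OF pc f]) blast
  then show ?thesis using residue_eqI by simp
qed

lemma residue_const: "residue (cst X r) = r"
  using CP_ideal_zero[OF is_CP_ideal] by (intro residue_eqI) simp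

lemma residue_ring_hom:
  assumes pc: "tauP_pseudocompact X P"
  shows "residue \<in> ring_hom (CP_ring X P) real_ring"
proof (rule ring_hom_memI)
  fix f g assume "f \<in> carrier (CP_ring X P)" and "g \<in> carrier (CP_ring X P)"
  then have f: "f \<in> CP X P" and g: "g \<in> CP X P" by (simp_all add: CP_ring_def)
  let ?df = "\<lambda>x. f x - cst X (residue f) x" and ?dg = "\<lambda>x. g x - cst X (residue g) x"
  have df: "?df \<in> M" and dg: "?dg \<in> M"
    using residue_congruent[OF pc] f g by blast+
  have "(\<lambda>x. g x * ?df x + cst X (residue f) x * ?dg x) \<in> M"
    using CP_ideal_add[OF is_CP_ideal CP_ideal_mult[OF is_CP_ideal df g]
        CP_ideal_mult[OF is_CP_ideal dg CP_const[OF closed_ideal]]] .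
  moreover have "(\<lambda>x. g x * ?df x + cst X (residue f) x * ?dg x)
      = (\<lambda>x. f x * g x - cst X (residue f * residue g) x)"
    using CP_vanishes_outside[OF f] by (auto simp: fun_eq_iff restrict0_def algebra_simps)
  ultimately have "residue (\<lambda>x. f x * g x) = residue f * residue g"
    by (intro residue_eqI) simp
  then show "residue (f \<otimes>\<^bsub>CP_ring X P\<^esub> g) = residue f \<otimes>\<^bsub>real_ring\<^esub> residue g"
    by (simp add: CP_ring_def real_ring_def)
  have "(\<lambda>x. ?df x + ?dg x) \<in> M" by (rule CP_ideal_add[OF is_CP_ideal df dg])
  moreover have "(\<lambda>x. ?df x + ?dg x) = (\<lambda>x. (f x + g x) - cst X (residue f + residue g) x)"
    by (auto simp: fun_eq_iff restrict0_def)
  ultimately have "residue (\<lambda>x. f x + g x) = residue f + residue g"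
    by (intro residue_eqI) simp
  then show "residue (f \<oplus>\<^bsub>CP_ring X P\<^esub> g) = residue f \<oplus>\<^bsub>real_ring\<^esub> residue g"
    by (simp add: CP_ring_def real_ring_def)
qed (simp_all add: real_ring_def one_CP_ring residue_const)

lemma residue_image: "residue ` carrier (CP_ring X P) = carrier real_ring"
  using residue_const CP_const[OF closed_ideal]
  by (auto simp: CP_ring_def real_ring_def image_iff) metis

lemma residue_kernel:
  assumes pc: "tauP_pseudocompact X P"
  shows "a_kernel (CP_ring X P) real_ring residue = M"
proof -
  have "f \<in> M \<longleftrightarrow> residue f = 0" if "f \<in> CP X P" for f
  proof -
    have "f \<in> M \<longleftrightarrow> (\<lambda>x. f x - cst X 0 x) \<in> M" by (simp add: restrict0_def)
    also have "\<dots> \<longleftrightarrow> residue f = 0"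
      using residue_congruent[OF pc that] residue_eqI by metis
    finally show ?thesis .
  qed
  then show ?thesis
    using CP_ideal_subset[OF is_CP_ideal] by (auto simp: a_kernel_def' CP_ring_def real_ring_def)
qed

lemma real_maximal:
  assumes pc: "tauP_pseudocompact X P"
  shows "real_maximal_ideal X P M"
proof -
  have "ring_hom_ring (CP_ring X P) real_ring residue"
    using cring_CP_ring[OF closed_ideal] cring_real_ring residue_ring_hom[OF pc]
    by (intro ring_hom_ringI2) (simp_all add: cring.axioms(1))
  then show ?thesis
    using ring_hom_ring.FactRing_iso[OF _ residue_image] residue_kernel[OF pc] maximal
    unfolding real_maximal_ideal_def by simp
qed

end

section \<open>Compactness\<close>

lemma tauP_compact_imp_pseudocompact:
  assumes P: "closed_ideal X P" and C: "tauP_compact X P"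
  shows "tauP_pseudocompact X P"
  unfolding tauP_pseudocompact_def CP_bdd_def
proof (intro equalityI subsetI)
  fix f assume f: "f \<in> CP X P"
  define Z where "Z n = ZP X (restrict0 X (\<lambda>x. min 0 (\<bar>f x\<bar> - real n)))" for n
  have Z_eq: "Z n = {x \<in> topspace X. real n \<le> \<bar>f x\<bar>}" for n
    by (auto simp: Z_def ZP_def restrict0_def min_def)
  have "restrict0 X (\<lambda>x. min 0 (\<bar>f x\<bar> - real n)) \<in> CP X P" for n
    by (rule CP_compose[OF P f, of "\<lambda>t. min 0 (\<bar>t\<bar> - real n)"]) (intro continuous_intros)
  then have "range Z \<subseteq> ZP X ` CP X P"
    unfolding Z_def by blast
  moreover have "\<Inter>(range Z) = {}"
  proof -
    have "x \<notin> \<Inter>(range Z)" for x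
    proof -
      obtain n where "\<bar>f x\<bar> < real n" using reals_Archimedean2 by blast
      then have "x \<notin> Z n" by (simp add: Z_eq)
      then show ?thesis by blast
    qed
    then show ?thesis by blast
  qed
  ultimately have "\<not> fip (range Z)"
    using C unfolding tauP_compact_def by (metis empty_not_UNIV image_is_empty)
  moreover have "decseq Z"
    unfolding decseq_def Z_eq by auto
  ultimately obtain n where "Z n = {}"
    by (metis fip_range_decseq)
  then have "\<forall>x\<in>topspace X. \<bar>f x\<bar> \<le> real n"
    by (auto simp: Z_eq)
  with f show "f \<in> {f \<in> CP X P. \<exists>B. \<forall>x\<in>topspace X. \<bar>f x\<bar> \<le> B}"
    by blast
qed blast

lemma tauP_compact_imp_realcompact:
  assumes P: "closed_ideal X P" and C: "tauP_compact X P"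
  shows "tauP_realcompact X P"
  unfolding tauP_realcompact_def fixed_ideal_def
proof (intro allI impI)
  fix M assume "real_maximal_ideal X P M"
  then interpret CP_maximal_ideal X P M
    using P by (simp add: CP_maximal_ideal_def real_maximal_ideal_def)
  have "ZP X ` M \<subseteq> ZP X ` CP X P" using CP_ideal_subset[OF is_CP_ideal] by blast
  moreover have "ZP X ` M \<noteq> {}" using CP_ideal_zero[OF is_CP_ideal] by blast
  ultimately show "\<Inter>(ZP X ` M) \<noteq> {}"
    using C fip_ZP unfolding tauP_compact_def by simp
qed

definition ideal_of_zero_sets :: "'a topology \<Rightarrow> 'a set set \<Rightarrow> 'a set set \<Rightarrow> ('a \<Rightarrow> real) set" where
  "ideal_of_zero_sets X P F =
     {g \<in> CP X P. \<exists>G. finite G \<and> G \<noteq> {} \<and> G \<subseteq> F \<and> \<Inter>G \<subseteq> ZP X g}"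

lemma ideal_of_zero_setsI:
  "g \<in> CP X P \<Longrightarrow> finite G \<Longrightarrow> G \<noteq> {} \<Longrightarrow> G \<subseteq> F \<Longrightarrow> \<Inter>G \<subseteq> ZP X g \<Longrightarrow>
    g \<in> ideal_of_zero_sets X P F"
  unfolding ideal_of_zero_sets_def by blast

lemma CP_ideal_ideal_of_zero_sets:
  assumes P: "closed_ideal X P" and "F \<noteq> {}" and F: "F \<subseteq> ZP X ` CP X P"
  shows "CP_ideal X P (ideal_of_zero_sets X P F)"
  unfolding CP_ideal_def
proof (intro conjI ballI)
  show "ideal_of_zero_sets X P F \<subseteq> CP X P" unfolding ideal_of_zero_sets_def by blast
  obtain Z where "Z \<in> F" using \<open>F \<noteq> {}\<close> by blast
  moreover have "Z \<subseteq> ZP X (\<lambda>_. 0)"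
    using \<open>Z \<in> F\<close> F ZP_subset_topspace by (force simp: ZP_def)
  ultimately show "(\<lambda>_. 0) \<in> ideal_of_zero_sets X P F"
    using ideal_of_zero_setsI[OF CP_zero[OF P], of "{Z}"] by simp
next
  fix a b assume "a \<in> ideal_of_zero_sets X P F" "b \<in> ideal_of_zero_sets X P F"
  then obtain Ga Gb where "a \<in> CP X P" "finite Ga" "Ga \<noteq> {}" "Ga \<subseteq> F" "\<Inter>Ga \<subseteq> ZP X a"
    and "b \<in> CP X P" "finite Gb" "Gb \<noteq> {}" "Gb \<subseteq> F" "\<Inter>Gb \<subseteq> ZP X b"
    unfolding ideal_of_zero_sets_def by blast
  moreover have "\<Inter>(Ga \<union> Gb) \<subseteq> ZP X (\<lambda>x. a x + b x)"
  proof -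
    have "\<Inter>(Ga \<union> Gb) \<subseteq> ZP X a \<inter> ZP X b" using \<open>\<Inter>Ga \<subseteq> ZP X a\<close> \<open>\<Inter>Gb \<subseteq> ZP X b\<close> by blast
    also have "\<dots> \<subseteq> ZP X (\<lambda>x. a x + b x)" by (auto simp: ZP_def)
    finally show ?thesis .
  qed
  ultimately show "(\<lambda>x. a x + b x) \<in> ideal_of_zero_sets X P F"
    by (intro ideal_of_zero_setsI[OF CP_add[OF P], of a b "Ga \<union> Gb"]) auto
next
  fix a r assume "a \<in> ideal_of_zero_sets X P F" "r \<in> CP X P"
  then obtain G where "a \<in> CP X P" "finite G" "G \<noteq> {}" "G \<subseteq> F" "\<Inter>G \<subseteq> ZP X a"
    unfolding ideal_of_zero_sets_def by blast
  then show "(\<lambda>x. r x * a x) \<in> ideal_of_zero_sets X P F"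
    using \<open>r \<in> CP X P\<close> by (intro ideal_of_zero_setsI[OF CP_mult[OF P], of r a G]) (auto simp: ZP_def)
qed

lemma const_one_notin_ideal_of_zero_sets:
  assumes "fip F"
  shows "cst X 1 \<notin> ideal_of_zero_sets X P F"
proof
  assume "cst X 1 \<in> ideal_of_zero_sets X P F"
  then obtain G where "finite G" "G \<noteq> {}" "G \<subseteq> F" "\<Inter>G \<subseteq> ZP X (cst X 1)"
    unfolding ideal_of_zero_sets_def by blast
  moreover have "ZP X (cst X 1) = {}" by (simp add: ZP_const)
  ultimately show False using assms unfolding fip_def by blast
qed

lemma subset_ZP_ideal_of_zero_sets:
  "F \<subseteq> ZP X ` CP X P \<Longrightarrow> F \<subseteq> ZP X ` ideal_of_zero_sets X P F"
  using ideal_of_zero_setsI[of _ X P "{Z}" F for Z] by blast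

lemma tauP_pseudocompact_realcompact_imp_compact:
  assumes P: "closed_ideal X P" and pc: "tauP_pseudocompact X P" and rc: "tauP_realcompact X P"
  shows "tauP_compact X P"
  unfolding tauP_compact_def
proof (intro allI impI)
  fix F assume "F \<subseteq> ZP X ` CP X P \<and> F \<noteq> {} \<and> fip F"
  then have F: "F \<subseteq> ZP X ` CP X P" "F \<noteq> {}" "fip F" by auto
  define J where "J = ideal_of_zero_sets X P F"
  have J: "ideal J (CP_ring X P)" "cst X 1 \<notin> J" "F \<subseteq> ZP X ` J"
    unfolding J_def ideal_iff_CP_ideal[OF P]
    using CP_ideal_ideal_of_zero_sets[OF P F(2,1)] const_one_notin_ideal_of_zero_sets[OF F(3)]
      subset_ZP_ideal_of_zero_sets[OF F(1)]
    by auto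
  have "ring (CP_ring X P)"
    using cring_CP_ring[OF P] by (rule cring.axioms(1))
  then obtain M where "maximalideal M (CP_ring X P)" "J \<subseteq> M"
    using ring.exists_maximalideal_superset[OF _ J(1)] J(2) by (auto simp: one_CP_ring)
  then interpret CP_maximal_ideal X P M
    using P by (simp add: CP_maximal_ideal_def)
  have "fixed_ideal X M"
    using rc real_maximal[OF pc] unfolding tauP_realcompact_def by simp
  then have "\<Inter>(ZP X ` M) \<noteq> {}" by (simp add: fixed_ideal_def)
  moreover have "\<Inter>(ZP X ` M) \<subseteq> \<Inter>F"
    using J(3) \<open>J \<subseteq> M\<close> by blast
  ultimately show "\<Inter>F \<noteq> {}" by blast
qed

theorem theorem4p10:
  fixes X :: "'a topology" and P :: "'a set set"
  assumes "t1_space X" and "closed_ideal X P"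
  shows "tauP_compact X P \<longleftrightarrow> tauP_pseudocompact X P \<and> tauP_realcompact X P"
  using tauP_compact_imp_pseudocompact[OF assms(2)] tauP_compact_imp_realcompact[OF assms(2)]
    tauP_pseudocompact_realcompact_imp_compact[OF assms(2)]
  by blast

end
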